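(* In the setting of the context, suppose the parameters satisfy $$p>3L,\quad c<\frac1{p+L},\quad \alpha<\min\Big\{\frac1{11L},\frac{c^2(p-L)^2}{4L(1+c(p-L))^2}\Big\},\quad \beta<\min\Big\{\frac1{36},\frac{(p-L)^2}{384\alpha p(p+L)^2}\Big\}.$$ Then for every $t\ge0$ the iterates of Smoothed-GDA satisfy $$\phi^t-\phi^{t+1}\ge\frac1{8c}\|x^t-x^{t+1}\|^2+\frac1{8\alpha}\|y^t-y^t_+(z^t)\|^2+\frac{p}{8\beta}\|z^t-z^{t+1}\|^2-24p\beta\|x^*(z^t)-x(y^t_+(z^t),z^t)\|^2.$$
   Context: $X\subseteq\mathbb{R}^n$ nonempty closed convex, $Y\subseteq\mathbb{R}^m$ nonempty closed convex compact, $f:\mathbb{R}^n\times\mathbb{R}^m\to\mathbb{R}$ continuously differentiable with $f(x,\cdot)$ concave for each $x$; $\nabla_xf$ and $\nabla_yf$ are $L$-Lipschitz ($L>0$); $\psi(x)=\max_{y\in Y}f(x,y)$ is bounded below by a finite constant. $P_S$ denotes Euclidean projection onto $S$. $K(x,z;y)=f(x,y)+\frac p2\|x-z\|^2$ ($p>L$, so $K(\cdot,z;y)$ is strongly convex). Define $x(y,z)=\arg\min_{x\in X}K(x,z;y)$, $d(y,z)=\min_{x\in X}K(x,z;y)$, $P(z)=\min_{x\in X}\max_{y\in Y}K(x,z;y)$, $x^*(z)=\arg\min_{x\in X}\max_{y\in Y}K(x,z;y)$, and $\phi(x,y,z)=K(x,z;y)-2d(y,z)+2P(z)$. Smoothed-GDA: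 $x^{t+1}=P_X(x^t-c\nabla_xK(x^t,z^t;y^t))$, $y^{t+1}=P_Y(y^t+\alpha\nabla_yK(x^{t+1},z^t;y^t))$, $z^{t+1}=z^t+\beta(x^{t+1}-z^t)$. Set $\phi^t=\phi(x^t,y^t,z^t)$ and $y^t_+(z^t)=P_Y\big(y^t+\alpha\nabla_yK(x(y^t,z^t),z^t;y^t)\big)$. *)

theory Defs
  imports "HOL-Analysis.Analysis"
begin

definition Kfun :: "('a::euclidean_space \<Rightarrow> 'b::euclidean_space \<Rightarrow> real) \<Rightarrow> real \<Rightarrow> 'a \<Rightarrow> 'a \<Rightarrow> 'b \<Rightarrow> real"
  where "Kfun f p x z y = f x y + p / 2 * (norm (x - z))\<^sup>2"

definition xmin :: "('a::euclidean_space \<Rightarrow> 'b::euclidean_space \<Rightarrow> real) \<Rightarrow> real \<Rightarrow> 'a set \<Rightarrow> 'b \<Rightarrow> 'a \<Rightarrow> 'a"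
  where "xmin f p X y z = (THE x. x \<in> X \<and> (\<forall>x'\<in>X. Kfun f p x z y \<le> Kfun f p x' z y))"

definition dfun :: "('a::euclidean_space \<Rightarrow> 'b::euclidean_space \<Rightarrow> real) \<Rightarrow> real \<Rightarrow> 'a set \<Rightarrow> 'b \<Rightarrow> 'a \<Rightarrow> real"
  where "dfun f p X y z = (INF x\<in>X. Kfun f p x z y)"

definition Pfun :: "('a::euclidean_space \<Rightarrow> 'b::euclidean_space \<Rightarrow> real) \<Rightarrow> real \<Rightarrow> 'a set \<Rightarrow> 'b set \<Rightarrow> 'a \<Rightarrow> real"
  where "Pfun f p X Y z = (INF x\<in>X. SUP y\<in>Y. Kfun f p x z y)"

definition xstar :: "('a::euclidean_space \<Rightarrow> 'b::euclidean_space \<Rightarrow> real) \<Rightarrow> real \<Rightarrow> 'a set \<Rightarrow> 'b set \<Rightarrow> 'a \<Rightarrow> 'a"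
  where "xstar f p X Y z = (THE x. x \<in> X \<and>
            (\<forall>x'\<in>X. (SUP y\<in>Y. Kfun f p x z y) \<le> (SUP y\<in>Y. Kfun f p x' z y)))"

definition phifun :: "('a::euclidean_space \<Rightarrow> 'b::euclidean_space \<Rightarrow> real) \<Rightarrow> real \<Rightarrow> 'a set \<Rightarrow> 'b set \<Rightarrow> 'a \<Rightarrow> 'b \<Rightarrow> 'a \<Rightarrow> real"
  where "phifun f p X Y x y z = Kfun f p x z y - 2 * dfun f p X y z + 2 * Pfun f p X Y z"

end

theory Submission
  imports Defs
begin

(*
  The projected gradient step in x decreases K by (1/c - (p + L)/2) ||x - x'||^2, by the descent
  lemma for the (p + L)-smooth, (p - L)-strongly convex function K(., z; y).  By concavity in y,
  the projected ascent step in y increases K - 2 d by ||y - y'||^2 / alpha up to a cross term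
  controlled by the distance between x' and x(y', z); this distance is bounded through the
  Lipschitz continuity of x(., z) (constant L/(p - L)) and the error bound
  ||x' - x(y, z)|| <= kappa ||x - x'|| of the projected gradient step.  The averaging step in z
  decreases K by exactly (p/2)(2/beta - 1) ||z - z'||^2, while d and P move by at most
  p ||x(y', z') - x*(z)|| ||z - z'||; routing that distance through x(y', z) and x(y_+, z)
  leaves the error term ||x*(z) - x(y_+, z)||.  Young's inequality and the step-size conditions
  absorb all cross terms.
*)

section \<open>Smooth and strongly convex functions\<close>

lemma quadratic_upper_bound_of_gradient:
  fixes F :: "'a::real_inner \<Rightarrow> real" and G :: "'a \<Rightarrow> 'a"
  assumes deriv: "\<And>x. (F has_derivative (\<lambda>h. G x \<bullet> h)) (at x)"
    and mono: "\<And>u v. (G u - G v) \<bullet> (u - v) \<le> M * (norm (u - v))\<^sup>2"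
  shows "F b \<le> F a + G a \<bullet> (b - a) + M / 2 * (norm (b - a))\<^sup>2"
proof -
  define d where "d = b - a"
  define \<phi> where "\<phi> t = F (a + t *\<^sub>R d) - t * (G a \<bullet> d) - M / 2 * t\<^sup>2 * (norm d)\<^sup>2" for t
  have \<phi>_deriv: "(\<phi> has_derivative
      (\<lambda>s. G (a + t *\<^sub>R d) \<bullet> (s *\<^sub>R d) - s * (G a \<bullet> d) - M / 2 * (2 * t * s) * (norm d)\<^sup>2)) (at t)" for t
  proof -
    have "((\<lambda>t. F (a + t *\<^sub>R d)) has_derivative (\<lambda>s. G (a + t *\<^sub>R d) \<bullet> (s *\<^sub>R d))) (at t)"
      by (rule has_derivative_compose[OF _ deriv]) (auto intro!: derivative_eq_intros)
    then show ?thesis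
      unfolding \<phi>_def by (auto intro!: derivative_eq_intros)
  qed
  then have "continuous_on {0..1} \<phi>"
    by (meson continuous_at_imp_continuous_on has_derivative_continuous)
  then obtain \<xi> where \<xi>: "0 < \<xi>" "\<xi> < 1"
    and mean_value: "\<phi> 1 - \<phi> 0 = (G (a + \<xi> *\<^sub>R d) - G a) \<bullet> d - M * \<xi> * (norm d)\<^sup>2"
    using mvt[OF zero_less_one _ \<phi>_deriv] by (auto simp: inner_diff_left)
  have "\<xi> * ((G (a + \<xi> *\<^sub>R d) - G a) \<bullet> d) \<le> \<xi> * (M * \<xi> * (norm d)\<^sup>2)"
    using mono[of "a + \<xi> *\<^sub>R d" a] \<xi> by (simp add: power2_eq_square algebra_simps)
  then have "\<phi> 1 \<le> \<phi> 0"
    using \<xi> mean_value by simp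
  then show ?thesis
    unfolding \<phi>_def d_def by (simp add: algebra_simps)
qed

lemma quadratic_lower_bound_of_gradient:
  fixes F :: "'a::real_inner \<Rightarrow> real" and G :: "'a \<Rightarrow> 'a"
  assumes deriv: "\<And>x. (F has_derivative (\<lambda>h. G x \<bullet> h)) (at x)"
    and mono: "\<And>u v. m * (norm (u - v))\<^sup>2 \<le> (G u - G v) \<bullet> (u - v)"
  shows "F a + G a \<bullet> (b - a) + m / 2 * (norm (b - a))\<^sup>2 \<le> F b"
proof -
  have "- F b \<le> - F a + (- G a) \<bullet> (b - a) + (- m) / 2 * (norm (b - a))\<^sup>2"
  proof (rule quadratic_upper_bound_of_gradient)
    show "((\<lambda>x. - F x) has_derivative (\<lambda>h. (- G x) \<bullet> h)) (at x)" for x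
      using has_derivative_minus[OF deriv[of x]] by simp
    show "(- G u - - G v) \<bullet> (u - v) \<le> - m * (norm (u - v))\<^sup>2" for u v
      using mono[of u v] by (simp add: inner_diff_left)
  qed
  then show ?thesis
    by (simp add: inner_minus_left)
qed

lemma strongly_convex_of_quadratic_lower_bound:
  fixes F :: "'a::real_inner \<Rightarrow> real" and G :: "'a \<Rightarrow> 'a"
  assumes lower: "\<And>a b. F a + G a \<bullet> (b - a) + m / 2 * (norm (b - a))\<^sup>2 \<le> F b"
    and t: "0 \<le> t" "t \<le> 1"
  shows "F (t *\<^sub>R a + (1 - t) *\<^sub>R b)
    \<le> t * F a + (1 - t) * F b - m / 2 * (t * (1 - t)) * (norm (a - b))\<^sup>2"
proof -
  define c where "c = t *\<^sub>R a + (1 - t) *\<^sub>R b"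
  have "a - c = (1 - t) *\<^sub>R (a - b)" "b - c = (- t) *\<^sub>R (a - b)"
    unfolding c_def by (simp_all add: algebra_simps)
  then have "F c + (1 - t) * (G c \<bullet> (a - b)) + m / 2 * (1 - t)\<^sup>2 * (norm (a - b))\<^sup>2 \<le> F a"
    and "F c - t * (G c \<bullet> (a - b)) + m / 2 * t\<^sup>2 * (norm (a - b))\<^sup>2 \<le> F b"
    using lower[of c a] lower[of c b] by (simp_all add: power_mult_distrib)
  from mult_left_mono[OF this(1) t(1)] mult_left_mono[OF this(2), of "1 - t"] t
  have "t * (F c + (1 - t) * (G c \<bullet> (a - b)) + m / 2 * (1 - t)\<^sup>2 * (norm (a - b))\<^sup>2)
      + (1 - t) * (F c - t * (G c \<bullet> (a - b)) + m / 2 * t\<^sup>2 * (norm (a - b))\<^sup>2)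
      \<le> t * F a + (1 - t) * F b"
    by linarith
  moreover have "t * (F c + (1 - t) * (G c \<bullet> (a - b)) + m / 2 * (1 - t)\<^sup>2 * (norm (a - b))\<^sup>2)
      + (1 - t) * (F c - t * (G c \<bullet> (a - b)) + m / 2 * t\<^sup>2 * (norm (a - b))\<^sup>2)
      = F c + m / 2 * (t * (1 - t)) * (norm (a - b))\<^sup>2"
    by (simp add: power2_eq_square field_simps)
  ultimately have "F c + m / 2 * (t * (1 - t)) * (norm (a - b))\<^sup>2 \<le> t * F a + (1 - t) * F b"
    by linarith
  then show ?thesis
    unfolding c_def by simp
qed

lemma concave_on_le_tangent:
  fixes g :: "'a::real_normed_vector \<Rightarrow> real"
  assumes concave: "concave_on UNIV g" and deriv: "(g has_derivative g') (at y)"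
  shows "g y' \<le> g y + g' (y' - y)"
proof -
  define d where "d = y' - y"
  define h where "h t = - g (y + t *\<^sub>R d)" for t
  have "convex_on UNIV h"
  proof (rule convex_onI)
    fix t s1 s2 :: real
    assume "0 < t" "t < 1"
    moreover have "y + ((1 - t) *\<^sub>R s1 + t *\<^sub>R s2) *\<^sub>R d
        = (1 - t) *\<^sub>R (y + s1 *\<^sub>R d) + t *\<^sub>R (y + s2 *\<^sub>R d)"
      by (simp add: algebra_simps)
    ultimately show "h ((1 - t) *\<^sub>R s1 + t *\<^sub>R s2) \<le> (1 - t) * h s1 + t * h s2"
      using concave_onD[OF concave, of t "y + s1 *\<^sub>R d" "y + s2 *\<^sub>R d"]
      unfolding h_def by simp
  qed simp
  moreover have "(h has_field_derivative - g' d) (at 0)"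
  proof -
    have "((\<lambda>t. y + t *\<^sub>R d) has_derivative (\<lambda>s. s *\<^sub>R d)) (at 0)"
      by (auto intro!: derivative_eq_intros)
    moreover have "(g has_derivative g') (at (y + 0 *\<^sub>R d))"
      using deriv by simp
    ultimately have "((\<lambda>t. g (y + t *\<^sub>R d)) has_derivative (\<lambda>s. g' (s *\<^sub>R d))) (at 0)"
      by (rule has_derivative_compose)
    then have "((\<lambda>t. g (y + t *\<^sub>R d)) has_derivative (\<lambda>s. s * g' d)) (at 0)"
      using has_derivative_linear[OF deriv] by (simp add: linear_scale)
    then show ?thesis
      unfolding h_def has_field_derivative_def by (auto intro!: derivative_eq_intros simp: algebra_simps)
  qed
  ultimately have "- g' d * (1 - 0) \<le> h 1 - h 0"
    by (intro convex_on_imp_above_tangent) auto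
  then show ?thesis
    unfolding h_def d_def by simp
qed

lemma closest_point_step_progress:
  assumes "convex S" "closed S" "x \<in> S"
  shows "(norm (x - closest_point S (x + v)))\<^sup>2 \<le> v \<bullet> (closest_point S (x + v) - x)"
proof -
  define x' where "x' = closest_point S (x + v)"
  have "((x - x') + v) \<bullet> (x - x') \<le> 0"
    using closest_point_dot[OF assms, of "x + v"] unfolding x'_def by (simp add: algebra_simps)
  then have "(x - x') \<bullet> (x - x') + v \<bullet> (x - x') \<le> 0"
    by (simp only: inner_add_left)
  moreover have "v \<bullet> (x' - x) = - (v \<bullet> (x - x'))"
    by (simp add: inner_diff_right)
  ultimately show ?thesis
    unfolding x'_def[symmetric] power2_norm_eq_inner by linarith
qed

lemma exists_minimizer_of_quadratic_minorant:
  fixes F :: "'a::euclidean_space \<Rightarrow> real"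
  assumes X: "closed X" "x0 \<in> X" and cont: "continuous_on UNIV F" and m: "m > 0"
    and minorant: "\<And>x. x \<in> X \<Longrightarrow> A + g \<bullet> (x - x0) + m / 2 * (norm (x - x0))\<^sup>2 \<le> F x"
  shows "\<exists>x\<in>X. \<forall>w\<in>X. F x \<le> F w"
proof -
  define S where "S = X \<inter> {x. F x \<le> F x0}"
  define C where "C = F x0 - A"
  have C: "C \<ge> 0"
    using minorant[OF X(2)] unfolding C_def by simp
  define R where "R = 2 * (norm g + C) / m + 1"
  have "S \<subseteq> cball x0 R"
  proof
    fix x assume x: "x \<in> S"
    define r where "r = norm (x - x0)"
    show "x \<in> cball x0 R"
    proof (rule ccontr)
      assume "x \<notin> cball x0 R"
      then have r: "r > R" "R \<ge> 1"
        unfolding r_def R_def using C m by (simp_all add: dist_norm norm_minus_commute)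
      have "norm g + C < m / 2 * r"
        using m \<open>r > R\<close> unfolding R_def by (simp add: field_simps)
      then have "(norm g + C) * r < m / 2 * r * r"
        using r by (intro mult_strict_right_mono) auto
      moreover have "- (norm g * r) \<le> g \<bullet> (x - x0)"
        unfolding r_def using norm_cauchy_schwarz[of "- g" "x - x0"] by simp
      moreover have "A + g \<bullet> (x - x0) + m / 2 * r\<^sup>2 \<le> F x" "F x \<le> F x0"
        using minorant x unfolding S_def r_def by auto
      moreover have "C \<le> C * r"
        using C r by (simp add: mult_le_cancel_left1)
      ultimately show False
        unfolding C_def power2_eq_square by (simp add: algebra_simps)
    qed
  qed
  moreover have "closed S"
    unfolding S_def using X(1) closed_Collect_le[OF cont continuous_on_const] by (intro closed_Int)
  ultimately have "compact S"
    using bounded_cball bounded_subset compact_eq_bounded_closed by blast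
  moreover have "x0 \<in> S"
    using X(2) unfolding S_def by simp
  ultimately obtain x where "x \<in> S" "\<forall>w\<in>S. F x \<le> F w"
    using continuous_attains_inf[of S F] continuous_on_subset[OF cont] by blast
  then show ?thesis
    unfolding S_def by force
qed

lemma minimizer_unique_of_strongly_convex:
  fixes F :: "'a::real_normed_vector \<Rightarrow> real"
  assumes "convex X" "\<mu> > 0"
    and strong: "\<And>a b. F ((1/2) *\<^sub>R a + (1/2) *\<^sub>R b)
                   \<le> (1/2) * F a + (1/2) * F b - \<mu> / 8 * (norm (a - b))\<^sup>2"
    and a: "a \<in> X" "\<forall>w\<in>X. F a \<le> F w" and b: "b \<in> X" "\<forall>w\<in>X. F b \<le> F w"
  shows "a = b"
proof (rule ccontr)
  assume "a \<noteq> b"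
  then have "\<mu> / 8 * (norm (a - b))\<^sup>2 > 0"
    using \<open>\<mu> > 0\<close> by simp
  moreover have "(1/2) *\<^sub>R a + (1/2) *\<^sub>R b \<in> X"
    using \<open>convex X\<close> a b unfolding convex_def by simp
  ultimately show False
    using strong[of a b] a b by force
qed

lemma minimizer_variational_inequality:
  fixes F :: "'a::real_inner \<Rightarrow> real"
  assumes "convex X" "M > 0"
    and upper: "\<And>a b. F b \<le> F a + G a \<bullet> (b - a) + M / 2 * (norm (b - a))\<^sup>2"
    and v: "v \<in> X" "\<forall>w\<in>X. F v \<le> F w" and w: "w \<in> X"
  shows "G v \<bullet> (w - v) \<ge> 0"
proof (rule ccontr)
  define \<delta> where "\<delta> = - (G v \<bullet> (w - v))"
  define n where "n = (norm (w - v))\<^sup>2"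
  define t where "t = min 1 (\<delta> / (M * n))"
  assume "\<not> ?thesis"
  then have "\<delta> > 0" "n > 0"
    unfolding \<delta>_def n_def by auto
  then have t: "0 < t" "t \<le> 1" "t * (M * n) \<le> \<delta>"
    using \<open>M > 0\<close> unfolding t_def by (auto simp: min_def field_simps)
  have "v + t *\<^sub>R (w - v) = (1 - t) *\<^sub>R v + t *\<^sub>R w"
    by (simp add: algebra_simps)
  then have "v + t *\<^sub>R (w - v) \<in> X"
    using \<open>convex X\<close> v w t unfolding convex_def by auto
  then have "F v \<le> F (v + t *\<^sub>R (w - v))"
    using v by blast
  also have "\<dots> \<le> F v - t * \<delta> + t * (t * (M * n)) / 2"
    using upper[where a = v and b = "v + t *\<^sub>R (w - v)"] t(1)
    unfolding \<delta>_def n_def by (simp add: power_mult_distrib power2_eq_square mult_ac)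
  also have "\<dots> < F v"
    using t mult_left_mono[OF t(3), of t] \<open>\<delta> > 0\<close> by simp
  finally show False
    by simp
qed

lemma norm_diff_le_of_variational_inequalities:
  fixes u v a b b' :: "'a::real_inner"
  assumes "a \<bullet> (v - u) \<ge> 0" "b \<bullet> (u - v) \<ge> 0"
    and "\<mu> * (norm (u - v))\<^sup>2 \<le> (b' - b) \<bullet> (u - v)"
    and "norm (b' - a) \<le> C" and "\<mu> > 0"
  shows "norm (u - v) \<le> C / \<mu>"
proof -
  have "(b' - b) \<bullet> (u - v) = (b' - a) \<bullet> (u - v) - a \<bullet> (v - u) - b \<bullet> (u - v)"
    by (simp add: inner_diff_left inner_diff_right)
  also have "\<dots> \<le> norm (b' - a) * norm (u - v)"
    using assms(1,2) norm_cauchy_schwarz[of "b' - a" "u - v"] by simp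
  also have "\<dots> \<le> C * norm (u - v)"
    using assms(4) by (simp add: mult_right_mono)
  finally have "\<mu> * norm (u - v) * norm (u - v) \<le> C * norm (u - v)"
    using assms(3) by (simp add: power2_eq_square mult.assoc)
  then have "\<mu> * norm (u - v) \<le> C"
    using assms(4) by (cases "u = v") (auto intro: order.trans[OF norm_ge_zero])
  then show ?thesis
    using \<open>\<mu> > 0\<close> by (simp add: field_simps)
qed

section \<open>Step-size arithmetic\<close>

lemma proximal_terms_bound:
  fixes p \<beta> s r e \<sigma>1 \<sigma>2 :: real
  assumes "p \<ge> 0" "\<beta> > 0" "\<beta> \<le> 1/36" "\<sigma>2 \<le> 3/2"
  shows "p / (8 * \<beta>) * s\<^sup>2 - 24 * p * \<beta> * e\<^sup>2 - p * \<sigma>1\<^sup>2 * r\<^sup>2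
    \<le> p / 2 * (2 / \<beta> - 1) * s\<^sup>2 - 2 * p * s * (\<sigma>2 * s + \<sigma>1 * r + e)"
proof -
  have "5 / 6 / \<beta> \<ge> 30"
    using assms(2,3) by (simp add: field_simps)
  then have "5 / 6 / \<beta> - 3 / 2 - 2 * \<sigma>2 \<ge> 0"
    using assms(4) by linarith
  then have "0 \<le> p / (24 * \<beta>) * (s - 24 * \<beta> * e)\<^sup>2 + p * (s - \<sigma>1 * r)\<^sup>2
      + p * s\<^sup>2 * (5 / 6 / \<beta> - 3 / 2 - 2 * \<sigma>2)"
    using assms(1,2) by simp
  also have "\<dots> = (p / 2 * (2 / \<beta> - 1) * s\<^sup>2 - 2 * p * s * (\<sigma>2 * s + \<sigma>1 * r + e))
      - (p / (8 * \<beta>) * s\<^sup>2 - 24 * p * \<beta> * e\<^sup>2 - p * \<sigma>1\<^sup>2 * r\<^sup>2)"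
    using assms(2) by (simp add: power2_eq_square field_simps)
  finally show ?thesis
    by simp
qed

text \<open>Below, \<open>(p + L + 1 / c) / (p - L)\<close> is the constant \<kappa> of the error bound
  \<open>||x' - x(y, z)|| \<le> \<kappa> ||x - x'||\<close> for the projected gradient step \<open>x'\<close>, and
  \<open>L / (p - L)\<close> is the Lipschitz constant of \<open>x(-, z)\<close>.\<close>

context
  fixes L p c \<alpha> :: real
  assumes L: "L > 0" and p: "p > 3 * L" and c: "c > 0" "c < 1 / (p + L)"
    and \<alpha>: "\<alpha> > 0" "\<alpha> < 1 / (11 * L)" "\<alpha> < c\<^sup>2 * (p - L)\<^sup>2 / (4 * L * (1 + c * (p - L))\<^sup>2)"
begin

lemma c_times_p_plus_L_less_one: "c * (p + L) < 1"
  using c p L by (simp add: field_simps)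

lemma four_c_L_le_one: "4 * c * L \<le> 1"
proof -
  have "c * (4 * L) \<le> c * (p + L)"
    using c p by (intro mult_left_mono) auto
  then show ?thesis
    using c_times_p_plus_L_less_one by simp
qed

lemma c_kappa_bound: "(c * ((p + L + 1 / c) / (p - L)) * (p - L))\<^sup>2 \<le> 4"
proof -
  have "c * ((p + L + 1 / c) / (p - L)) * (p - L) = c * (p + L) + 1"
    using c p L by (simp add: field_simps)
  moreover have "0 \<le> c * (p + L) + 1"
    using c p L by simp
  ultimately show ?thesis
    using power_mono[of "c * (p + L) + 1" 2 2] c_times_p_plus_L_less_one by simp
qed

lemma alpha_bound: "4 * L * \<alpha> * (1 + c * (p - L))\<^sup>2 \<le> c\<^sup>2 * (p - L)\<^sup>2"
proof -
  have "0 < c * (p - L)"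
    using c p L by simp
  then have "0 < 4 * L * (1 + c * (p - L))\<^sup>2"
    using L by simp
  then show ?thesis
    using \<alpha>(3) by (simp add: field_simps)
qed

lemma alpha_bound_weak: "4 * L * \<alpha> \<le> c\<^sup>2 * (p - L)\<^sup>2"
proof -
  have "4 * L * \<alpha> * 1 \<le> 4 * L * \<alpha> * (1 + c * (p - L))\<^sup>2"
    using L \<alpha>(1) c p by (intro mult_left_mono) auto
  then show ?thesis
    using alpha_bound by simp
qed

lemma alpha_L_kappa_bound: "\<alpha> * L\<^sup>2 * ((p + L + 1 / c) / (p - L))\<^sup>2 \<le> L"
proof -
  define \<kappa> where "\<kappa> = (p + L + 1 / c) / (p - L)"
  have "(\<alpha> * L\<^sup>2 * \<kappa>\<^sup>2) * (c\<^sup>2 * (p - L)\<^sup>2) = (\<alpha> * L\<^sup>2) * (c * \<kappa> * (p - L))\<^sup>2"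
    by (simp add: power2_eq_square algebra_simps)
  also have "\<dots> \<le> (\<alpha> * L\<^sup>2) * 4"
    using c_kappa_bound \<alpha>(1) unfolding \<kappa>_def by (intro mult_left_mono) auto
  also have "\<dots> = L * (4 * L * \<alpha>)"
    by (simp add: power2_eq_square)
  also have "\<dots> \<le> L * (c\<^sup>2 * (p - L)\<^sup>2)"
    using alpha_bound_weak L by (intro mult_left_mono) auto
  finally show ?thesis
    using c p L unfolding \<kappa>_def by simp
qed

lemma p_sigma_alpha_bound: "p * (L / (p - L))\<^sup>2 * \<alpha> \<le> 1 / 4"
proof -
  define \<mu> where "\<mu> = p - L"
  define \<sigma> where "\<sigma> = L / (p - L)"
  have "\<mu>\<^sup>2 - 4 / 3 * (p * L) = (p - 3 * L) * (p - L / 3)"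
    unfolding \<mu>_def by (simp add: power2_eq_square algebra_simps)
  moreover have "(p - 3 * L) * (p - L / 3) \<ge> 0"
    using p L by simp
  ultimately have "p * L \<le> 3 / 4 * \<mu>\<^sup>2"
    by simp
  moreover have "L * \<alpha> \<le> 1 / 11"
    using \<alpha>(2) L by (simp add: field_simps)
  ultimately have bound: "(p * L) * (L * \<alpha>) \<le> (3 / 4 * \<mu>\<^sup>2) * (1 / 11)"
    by (rule mult_mono) (use L \<alpha>(1) in auto)
  have "\<sigma> * \<mu> = L"
    unfolding \<sigma>_def \<mu>_def using p L by simp
  then have "p * \<sigma>\<^sup>2 * \<alpha> * \<mu>\<^sup>2 = (p * L) * (L * \<alpha>)"
    by (metis (no_types, lifting) mult.assoc mult.commute power2_eq_square)
  with bound have "p * \<sigma>\<^sup>2 * \<alpha> * \<mu>\<^sup>2 \<le> (3 / 4 * \<mu>\<^sup>2) * (1 / 11)"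
    by (simp only:)
  then have "(p * \<sigma>\<^sup>2 * \<alpha>) * \<mu>\<^sup>2 \<le> 1 / 4 * \<mu>\<^sup>2"
    using zero_le_power2[of \<mu>] by linarith
  moreover have "\<mu>\<^sup>2 > 0"
    unfolding \<mu>_def using p L by simp
  ultimately show ?thesis
    unfolding \<sigma>_def by (rule mult_right_le_imp_le)
qed

lemma c_L_kappa_alpha_bound: "4 * c * L\<^sup>2 * ((p + L + 1 / c) / (p - L))\<^sup>2 * \<alpha> \<le> 21 / 44"
proof -
  define \<kappa> where "\<kappa> = (p + L + 1 / c) / (p - L)"
  define w where "w = c * L"
  have w: "0 \<le> w" "w \<le> 1 / 4"
    using four_c_L_le_one c L unfolding w_def by auto
  have "21 / 44 * (1 + 2 * w)\<^sup>2 - 4 * w = (84 * (w - 1 / 4)\<^sup>2 + 50 * (1 / 4 - w) + 13 / 4) / 44"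
    by (simp add: power2_eq_square algebra_simps)
  moreover have "0 \<le> 84 * (w - 1 / 4)\<^sup>2 + 50 * (1 / 4 - w) + 13 / 4"
    using w by (intro add_nonneg_nonneg) auto
  ultimately have "4 * w \<le> 21 / 44 * (1 + 2 * w)\<^sup>2"
    by argo
  also have "\<dots> \<le> 21 / 44 * (1 + c * (p - L))\<^sup>2"
  proof -
    have "c * (2 * L) \<le> c * (p - L)"
      using c p by (intro mult_left_mono) auto
    then have "1 + 2 * w \<le> 1 + c * (p - L)"
      unfolding w_def by simp
    then show ?thesis
      using w by (intro mult_left_mono power_mono) auto
  qed
  finally have cL: "4 * (c * L) \<le> 21 / 44 * (1 + c * (p - L))\<^sup>2"
    unfolding w_def .
  have "(4 * c * L\<^sup>2 * \<kappa>\<^sup>2 * \<alpha>) * (c * (p - L)\<^sup>2 * (1 + c * (p - L))\<^sup>2)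
      = (4 * L * \<alpha> * (1 + c * (p - L))\<^sup>2) * (L * (c * \<kappa> * (p - L))\<^sup>2)"
    by (simp add: power2_eq_square algebra_simps)
  also have "\<dots> \<le> (c\<^sup>2 * (p - L)\<^sup>2) * (L * 4)"
  proof (rule mult_mono[OF alpha_bound])
    show "L * (c * \<kappa> * (p - L))\<^sup>2 \<le> L * 4"
      using c_kappa_bound L unfolding \<kappa>_def by (intro mult_left_mono) auto
  qed (use L in auto)
  also have "\<dots> = (4 * (c * L)) * (c * (p - L)\<^sup>2)"
    by (simp add: power2_eq_square algebra_simps)
  also have "\<dots> \<le> (21 / 44 * (1 + c * (p - L))\<^sup>2) * (c * (p - L)\<^sup>2)"
    using cL c by (intro mult_right_mono) auto
  finally have "(4 * c * L\<^sup>2 * \<kappa>\<^sup>2 * \<alpha>) * (c * (p - L)\<^sup>2 * (1 + c * (p - L))\<^sup>2)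
      \<le> 21 / 44 * (c * (p - L)\<^sup>2 * (1 + c * (p - L))\<^sup>2)"
    by (simp add: algebra_simps)
  moreover have "c * (p - L) > 0"
    using c p L by simp
  then have "1 + c * (p - L) > 0"
    by linarith
  then have "c * (p - L)\<^sup>2 * (1 + c * (p - L))\<^sup>2 > 0"
    using c p L by simp
  ultimately show ?thesis
    unfolding \<kappa>_def by (rule mult_right_le_imp_le)
qed

lemma dual_coefficient_bound:
  "2 * L * (L / (p - L)) + 2 * L + 4 * c * L\<^sup>2 * ((p + L + 1 / c) / (p - L))\<^sup>2 \<le> 3 / (4 * \<alpha>)"
proof -
  define \<sigma> where "\<sigma> = L / (p - L)"
  have "\<sigma> \<le> 1 / 2"
    using p L unfolding \<sigma>_def by (simp add: field_simps)
  then have "2 * L * \<sigma> + 2 * L \<le> 3 * L"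
    using mult_left_mono[of \<sigma> "1 / 2" L] L by simp
  moreover have "3 * L \<le> 3 / (11 * \<alpha>)"
    using \<alpha>(1,2) L by (simp add: field_simps)
  moreover have "4 * c * L\<^sup>2 * ((p + L + 1 / c) / (p - L))\<^sup>2 \<le> 21 / (44 * \<alpha>)"
    using c_L_kappa_alpha_bound \<alpha>(1) by (simp add: field_simps)
  moreover have "3 / (11 * \<alpha>) + 21 / (44 * \<alpha>) = 3 / (4 * \<alpha>)"
    by (simp add: field_simps)
  ultimately show ?thesis
    unfolding \<sigma>_def[symmetric] by linarith
qed

lemma dual_gap_terms_bound:
  assumes "0 \<le> r" "r \<le> \<alpha> * L * ((p + L + 1 / c) / (p - L)) * a"
  shows "(p * (L / (p - L))\<^sup>2 + 1 / (4 * \<alpha>)) * r\<^sup>2 \<le> 1 / (8 * c) * a\<^sup>2"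
proof -
  define \<kappa> where "\<kappa> = (p + L + 1 / c) / (p - L)"
  define \<sigma> where "\<sigma> = L / (p - L)"
  have "r\<^sup>2 \<le> (\<alpha> * L * \<kappa> * a)\<^sup>2"
    using assms unfolding \<kappa>_def by (intro power_mono) auto
  then have "(p * \<sigma>\<^sup>2 + 1 / (4 * \<alpha>)) * r\<^sup>2 \<le> (p * \<sigma>\<^sup>2 + 1 / (4 * \<alpha>)) * (\<alpha> * L * \<kappa> * a)\<^sup>2"
    using p L \<alpha>(1) by (intro mult_left_mono) auto
  also have "\<dots> = (p * \<sigma>\<^sup>2 * \<alpha> + 1 / 4) * (\<alpha> * L\<^sup>2 * \<kappa>\<^sup>2) * a\<^sup>2"
    using \<alpha>(1) by (simp add: power2_eq_square field_simps)
  also have "\<dots> \<le> (1 / 2 * L) * a\<^sup>2"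
    using mult_mono[OF _ alpha_L_kappa_bound, of "p * \<sigma>\<^sup>2 * \<alpha> + 1 / 4" "1 / 2"]
      p_sigma_alpha_bound \<alpha>(1) unfolding \<sigma>_def \<kappa>_def by (intro mult_right_mono) auto
  also have "\<dots> \<le> 1 / (8 * c) * a\<^sup>2"
    using four_c_L_le_one c by (intro mult_right_mono) (auto simp: field_simps)
  finally show ?thesis
    unfolding \<sigma>_def .
qed

lemma primal_dual_terms_bound:
  fixes a b r Y2 :: real
  assumes r: "0 \<le> r" "r \<le> \<alpha> * L * ((p + L + 1 / c) / (p - L)) * a" and Y2: "Y2 \<le> (b + r)\<^sup>2"
  shows "1 / (8 * c) * a\<^sup>2 + 1 / (8 * \<alpha>) * Y2
    \<le> (1 / c - (p + L) / 2) * a\<^sup>2 + b\<^sup>2 / \<alpha>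
       - 2 * L * (L / (p - L) * b + (p + L + 1 / c) / (p - L) * a + b) * b
       - p * (L / (p - L))\<^sup>2 * r\<^sup>2"
proof -
  define \<kappa> where "\<kappa> = (p + L + 1 / c) / (p - L)"
  define \<sigma> where "\<sigma> = L / (p - L)"
  define Q1 where "Q1 = (1 / (2 * c) - (p + L) / 2) * a\<^sup>2"
  define Q2 where "Q2 = (3 / (4 * \<alpha>) - (2 * L * \<sigma> + 2 * L + 4 * c * L\<^sup>2 * \<kappa>\<^sup>2)) * b\<^sup>2"
  define Q3 where "Q3 = a\<^sup>2 / (8 * c) - (p * \<sigma>\<^sup>2 + 1 / (4 * \<alpha>)) * r\<^sup>2"
  define Q4 where "Q4 = a\<^sup>2 / (4 * c) + 4 * c * L\<^sup>2 * \<kappa>\<^sup>2 * b\<^sup>2 - 2 * L * \<kappa> * a * b"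
  define Q5 where "Q5 = b\<^sup>2 / (4 * \<alpha>) + r\<^sup>2 / (4 * \<alpha>) - Y2 / (8 * \<alpha>)"
  have "0 \<le> 1 / (2 * c) - (p + L) / 2"
    using c_times_p_plus_L_less_one c by (simp add: field_simps)
  then have "Q1 \<ge> 0"
    unfolding Q1_def by simp
  moreover have "Q2 \<ge> 0"
    using dual_coefficient_bound unfolding Q2_def \<sigma>_def \<kappa>_def by simp
  moreover have "Q3 \<ge> 0"
    using dual_gap_terms_bound[OF r] unfolding Q3_def \<sigma>_def by simp
  moreover have "Q4 \<ge> 0"
  proof -
    have "Q4 = (a - 4 * c * L * \<kappa> * b)\<^sup>2 / (4 * c)"
      unfolding Q4_def using c by (simp add: power2_eq_square field_simps)
    then show ?thesis
      using c by simp
  qed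
  moreover have "Q5 \<ge> 0"
  proof -
    have "(b + r)\<^sup>2 \<le> 2 * b\<^sup>2 + 2 * r\<^sup>2"
      using zero_le_power2[of "b - r"] by (simp add: power2_eq_square algebra_simps)
    then have "0 \<le> (2 * b\<^sup>2 + 2 * r\<^sup>2 - Y2) / (8 * \<alpha>)"
      using Y2 \<alpha>(1) by simp
    also have "\<dots> = Q5"
      unfolding Q5_def using \<alpha>(1) by (simp add: field_simps)
    finally show ?thesis .
  qed
  moreover have "(1 / c - (p + L) / 2) * a\<^sup>2 + b\<^sup>2 / \<alpha> - 2 * L * (\<sigma> * b + \<kappa> * a + b) * b - p * \<sigma>\<^sup>2 * r\<^sup>2
      - (1 / (8 * c) * a\<^sup>2 + 1 / (8 * \<alpha>) * Y2) = Q1 + Q2 + Q3 + Q4 + Q5"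
    unfolding Q1_def Q2_def Q3_def Q4_def Q5_def using c \<alpha>(1)
    by (simp add: power2_eq_square field_simps)
  ultimately show ?thesis
    unfolding \<sigma>_def \<kappa>_def by linarith
qed

end

section \<open>The smoothed objective\<close>

locale smoothed_gda =
  fixes f :: "'a::euclidean_space \<Rightarrow> 'b::euclidean_space \<Rightarrow> real"
    and gx :: "'a \<Rightarrow> 'b \<Rightarrow> 'a" and gy :: "'a \<Rightarrow> 'b \<Rightarrow> 'b"
    and X :: "'a set" and Y :: "'b set" and L p :: real
  assumes X: "X \<noteq> {}" "closed X" "convex X"
    and Y: "Y \<noteq> {}" "compact Y" "convex Y"
    and deriv: "\<And>x y. (case_prod f has_derivative (\<lambda>(h, k). gx x y \<bullet> h + gy x y \<bullet> k)) (at (x, y))"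
    and concave: "\<And>x. concave_on UNIV (f x)"
    and L_pos: "L > 0"
    and Lip_x: "\<And>x y x' y'. norm (gx x y - gx x' y') \<le> L * norm ((x, y) - (x', y'))"
    and Lip_y: "\<And>x y x' y'. norm (gy x y - gy x' y') \<le> L * norm ((x, y) - (x', y'))"
    and p_gt: "p > 3 * L"
begin

abbreviation K :: "'a \<Rightarrow> 'a \<Rightarrow> 'b \<Rightarrow> real" where
  "K \<equiv> Kfun f p"

definition gradK :: "'b \<Rightarrow> 'a \<Rightarrow> 'a \<Rightarrow> 'a" where
  "gradK y z x = gx x y + p *\<^sub>R (x - z)"

definition Kmax :: "'a \<Rightarrow> 'a \<Rightarrow> real" where
  "Kmax z x = (SUP y\<in>Y. K x z y)"

lemma p_minus_L_pos: "p - L > 0"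
  using p_gt L_pos by simp

lemma closed_Y: "closed Y"
  using Y(2) by (rule compact_imp_closed)

lemma norm_Pair_diff_le: "L * norm ((x, y) - (x', y')) \<le> L * norm (x - x') + L * norm (y - y')"
  using norm_Pair_le[of "x - x'" "y - y'"] L_pos by (simp add: distrib_left[symmetric])

lemma gx_lipschitz: "norm (gx x y - gx x' y') \<le> L * norm (x - x') + L * norm (y - y')"
  using Lip_x norm_Pair_diff_le order_trans by blast

lemma gy_lipschitz: "norm (gy x y - gy x' y') \<le> L * norm (x - x') + L * norm (y - y')"
  using Lip_y norm_Pair_diff_le order_trans by blast

lemma f_has_derivative_x: "((\<lambda>x. f x y) has_derivative (\<lambda>h. gx x y \<bullet> h)) (at x)"
proof -
  have "((\<lambda>x. (x, y)) has_derivative (\<lambda>h. (h, 0))) (at x)"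
    by (auto intro!: derivative_eq_intros)
  from has_derivative_compose[OF this deriv[of x y]] show ?thesis
    by simp
qed

lemma f_has_derivative_y: "(f x has_derivative (\<lambda>k. gy x y \<bullet> k)) (at y)"
proof -
  have "((\<lambda>y. (x, y)) has_derivative (\<lambda>k. (0, k))) (at y)"
    by (auto intro!: derivative_eq_intros)
  from has_derivative_compose[OF this deriv[of x y]] show ?thesis
    by simp
qed

lemma f_le_tangent_y: "f x y' \<le> f x y + gy x y \<bullet> (y' - y)"
  by (rule concave_on_le_tangent[OF concave f_has_derivative_y])

lemma K_has_derivative: "((\<lambda>x. K x z y) has_derivative (\<lambda>h. gradK y z x \<bullet> h)) (at x)"
proof -
  have "((\<lambda>x. f x y + p / 2 * ((x - z) \<bullet> (x - z))) has_derivative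
      (\<lambda>h. gx x y \<bullet> h + p / 2 * (h \<bullet> (x - z) + (x - z) \<bullet> h))) (at x)"
    by (auto intro!: derivative_eq_intros f_has_derivative_x)
  then show ?thesis
    unfolding Kfun_def gradK_def power2_norm_eq_inner
    by (simp add: inner_add_left inner_commute algebra_simps)
qed

lemma gradK_lipschitz: "norm (gradK y z u - gradK y z v) \<le> (p + L) * norm (u - v)"
proof -
  have "gradK y z u - gradK y z v = (gx u y - gx v y) + p *\<^sub>R (u - v)"
    unfolding gradK_def by (simp add: algebra_simps)
  then have "norm (gradK y z u - gradK y z v) \<le> norm (gx u y - gx v y) + p * norm (u - v)"
    using norm_triangle_ineq[of "gx u y - gx v y" "p *\<^sub>R (u - v)"] p_gt L_pos by simp
  then show ?thesis
    using gx_lipschitz[of u y v y] by (simp add: algebra_simps)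
qed

lemma gradK_strongly_monotone: "(p - L) * (norm (u - v))\<^sup>2 \<le> (gradK y z u - gradK y z v) \<bullet> (u - v)"
proof -
  have "(gradK y z u - gradK y z v) \<bullet> (u - v) = (gx u y - gx v y) \<bullet> (u - v) + p * (norm (u - v))\<^sup>2"
    unfolding gradK_def by (simp add: algebra_simps inner_diff_left power2_norm_eq_inner inner_add_left)
  moreover have "- ((gx u y - gx v y) \<bullet> (u - v)) \<le> norm (gx u y - gx v y) * norm (u - v)"
    using abs_ge_minus_self Cauchy_Schwarz_ineq2[of "gx u y - gx v y" "u - v"] by (rule order_trans)
  moreover have "norm (gx u y - gx v y) * norm (u - v) \<le> L * (norm (u - v))\<^sup>2"
    using mult_right_mono[OF gx_lipschitz[of u y v y] norm_ge_zero[of "u - v"]]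
    by (simp add: power2_eq_square)
  ultimately show ?thesis
    by (simp add: algebra_simps)
qed

lemma K_upper_bound: "K b z y \<le> K a z y + gradK y z a \<bullet> (b - a) + (p + L) / 2 * (norm (b - a))\<^sup>2"
proof (rule quadratic_upper_bound_of_gradient[OF K_has_derivative])
  show "(gradK y z u - gradK y z v) \<bullet> (u - v) \<le> (p + L) * (norm (u - v))\<^sup>2" for u v
    using norm_cauchy_schwarz[of "gradK y z u - gradK y z v" "u - v"]
      mult_right_mono[OF gradK_lipschitz[of y z u v] norm_ge_zero[of "u - v"]]
    by (simp add: power2_eq_square mult.assoc)
qed

lemma K_lower_bound: "K a z y + gradK y z a \<bullet> (b - a) + (p - L) / 2 * (norm (b - a))\<^sup>2 \<le> K b z y"
  by (rule quadratic_lower_bound_of_gradient[OF K_has_derivative gradK_strongly_monotone])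

lemma K_strongly_convex:
  "0 \<le> t \<Longrightarrow> t \<le> 1 \<Longrightarrow> K (t *\<^sub>R a + (1 - t) *\<^sub>R b) z y
     \<le> t * K a z y + (1 - t) * K b z y - (p - L) / 2 * (t * (1 - t)) * (norm (a - b))\<^sup>2"
  by (rule strongly_convex_of_quadratic_lower_bound[OF K_lower_bound])

lemma bdd_above_K: "bdd_above ((\<lambda>y. K x z y) ` Y)"
proof -
  have "continuous_on UNIV (f x)"
    using f_has_derivative_y by (meson continuous_at_imp_continuous_on has_derivative_continuous)
  then have "continuous_on Y (\<lambda>y. K x z y)"
    unfolding Kfun_def by (intro continuous_intros) (rule continuous_on_subset, auto)
  then show ?thesis
    using Y(2) by (intro bounded_imp_bdd_above compact_imp_bounded compact_continuous_image)
qed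

lemma xmin_unique_exists: "\<exists>!x. x \<in> X \<and> (\<forall>w\<in>X. K x z y \<le> K w z y)"
proof -
  obtain x0 where "x0 \<in> X"
    using X(1) by auto
  have "\<exists>x\<in>X. \<forall>w\<in>X. K x z y \<le> K w z y"
    by (rule exists_minimizer_of_quadratic_minorant[OF X(2) \<open>x0 \<in> X\<close> _ p_minus_L_pos K_lower_bound])
      (use K_has_derivative in \<open>meson continuous_at_imp_continuous_on has_derivative_continuous\<close>)
  moreover have "a = b" if "a \<in> X \<and> (\<forall>w\<in>X. K a z y \<le> K w z y)"
    and "b \<in> X \<and> (\<forall>w\<in>X. K b z y \<le> K w z y)" for a b
    using that K_strongly_convex[of "1/2" _ _ z y]
    by (intro minimizer_unique_of_strongly_convex[OF X(3) p_minus_L_pos, of "\<lambda>x. K x z y"]) auto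
  ultimately show ?thesis
    by blast
qed

lemma xmin_in_X: "xmin f p X y z \<in> X"
  and xmin_le: "w \<in> X \<Longrightarrow> K (xmin f p X y z) z y \<le> K w z y"
  using theI'[OF xmin_unique_exists[of z y]] unfolding xmin_def by auto

lemma dfun_eq: "dfun f p X y z = K (xmin f p X y z) z y"
  unfolding dfun_def using xmin_in_X xmin_le by (intro cInf_eq_minimum) auto

lemma dfun_le: "w \<in> X \<Longrightarrow> dfun f p X y z \<le> K w z y"
  using dfun_eq xmin_le by simp

lemma xmin_variational_inequality: "w \<in> X \<Longrightarrow> gradK y z (xmin f p X y z) \<bullet> (w - xmin f p X y z) \<ge> 0"
  using p_gt L_pos xmin_in_X xmin_le
  by (intro minimizer_variational_inequality[OF X(3) _ K_upper_bound]) auto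

lemma Kmax_ge: "y \<in> Y \<Longrightarrow> K x z y \<le> Kmax z x"
  unfolding Kmax_def by (rule cSUP_upper[OF _ bdd_above_K])

lemma Kmax_strongly_convex:
  assumes "0 \<le> t" "t \<le> 1"
  shows "Kmax z (t *\<^sub>R a + (1 - t) *\<^sub>R b)
    \<le> t * Kmax z a + (1 - t) * Kmax z b - (p - L) / 2 * (t * (1 - t)) * (norm (a - b))\<^sup>2"
  unfolding Kmax_def[of z "t *\<^sub>R a + (1 - t) *\<^sub>R b"]
proof (rule cSUP_least[OF Y(1)])
  fix y assume "y \<in> Y"
  then have "t * K a z y \<le> t * Kmax z a" "(1 - t) * K b z y \<le> (1 - t) * Kmax z b"
    using Kmax_ge assms by (simp_all add: mult_left_mono)
  then show "K (t *\<^sub>R a + (1 - t) *\<^sub>R b) z y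
      \<le> t * Kmax z a + (1 - t) * Kmax z b - (p - L) / 2 * (t * (1 - t)) * (norm (a - b))\<^sup>2"
    using K_strongly_convex[OF assms, of a b z y] by linarith
qed

lemma Kmax_continuous: "continuous_on UNIV (Kmax z)"
proof (rule convex_on_continuous[OF open_UNIV], rule convex_onI)
  fix t :: real and a b :: 'a
  assume "0 < t" "t < 1"
  then have "0 \<le> (p - L) / 2 * ((1 - t) * (1 - (1 - t))) * (norm (a - b))\<^sup>2"
    using p_minus_L_pos by simp
  then show "Kmax z ((1 - t) *\<^sub>R a + t *\<^sub>R b) \<le> (1 - t) * Kmax z a + t * Kmax z b"
    using Kmax_strongly_convex[of "1 - t" z a b] \<open>0 < t\<close> \<open>t < 1\<close> by simp
qed simp

lemma xstar_unique_exists: "\<exists>!x. x \<in> X \<and> (\<forall>w\<in>X. Kmax z x \<le> Kmax z w)"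
proof -
  obtain x0 y0 where "x0 \<in> X" "y0 \<in> Y"
    using X(1) Y(1) by auto
  have "\<exists>x\<in>X. \<forall>w\<in>X. Kmax z x \<le> Kmax z w"
    using K_lower_bound[of x0 z y0] Kmax_ge[OF \<open>y0 \<in> Y\<close>] order_trans
    by (intro exists_minimizer_of_quadratic_minorant[OF X(2) \<open>x0 \<in> X\<close> Kmax_continuous p_minus_L_pos])
      blast
  moreover have "a = b" if "a \<in> X \<and> (\<forall>w\<in>X. Kmax z a \<le> Kmax z w)"
    and "b \<in> X \<and> (\<forall>w\<in>X. Kmax z b \<le> Kmax z w)" for a b
    using that Kmax_strongly_convex[of "1/2" z]
    by (intro minimizer_unique_of_strongly_convex[OF X(3) p_minus_L_pos, of "Kmax z"]) auto
  ultimately show ?thesis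
    by blast
qed

lemma xstar_in_X: "xstar f p X Y z \<in> X"
  and xstar_le: "w \<in> X \<Longrightarrow> Kmax z (xstar f p X Y z) \<le> Kmax z w"
  using theI'[OF xstar_unique_exists[of z]] unfolding xstar_def Kmax_def by auto

lemma Pfun_eq: "Pfun f p X Y z = Kmax z (xstar f p X Y z)"
  unfolding Pfun_def Kmax_def[symmetric] using xstar_in_X xstar_le by (intro cInf_eq_minimum) auto

lemma Pfun_le: "w \<in> X \<Longrightarrow> Pfun f p X Y z \<le> Kmax z w"
  using Pfun_eq xstar_le by simp

lemma Kmax_shift: "Kmax z' x = Kmax z x + p / 2 * ((norm (x - z'))\<^sup>2 - (norm (x - z))\<^sup>2)"
proof -
  have "Kmax z' x = (SUP y\<in>Y. p / 2 * ((norm (x - z'))\<^sup>2 - (norm (x - z))\<^sup>2) + K x z y)"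
    unfolding Kmax_def Kfun_def by (simp add: algebra_simps)
  then show ?thesis
    unfolding Kmax_def by (simp add: Sup_add_eq[OF bdd_above_K Y(1)])
qed

lemma xmin_lipschitz_y: "norm (xmin f p X y1 z - xmin f p X y2 z) \<le> L / (p - L) * norm (y1 - y2)"
proof -
  define u where "u = xmin f p X y1 z"
  define v where "v = xmin f p X y2 z"
  have "gradK y2 z u - gradK y1 z u = gx u y2 - gx u y1"
    unfolding gradK_def by simp
  then have "norm (u - v) \<le> L * norm (y1 - y2) / (p - L)"
    using gx_lipschitz[of u y2 u y1] xmin_in_X p_minus_L_pos gradK_strongly_monotone
      xmin_variational_inequality[OF xmin_in_X]
    by (intro norm_diff_le_of_variational_inequalities[where a = "gradK y1 z u" and b = "gradK y2 z v" and b' = "gradK y2 z u"])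
      (auto simp: u_def v_def norm_minus_commute)
  then show ?thesis
    unfolding u_def v_def by simp
qed

lemma xmin_lipschitz_z: "norm (xmin f p X y z1 - xmin f p X y z2) \<le> p / (p - L) * norm (z1 - z2)"
proof -
  define u where "u = xmin f p X y z1"
  define v where "v = xmin f p X y z2"
  have "gradK y z2 u - gradK y z1 u = p *\<^sub>R (z1 - z2)"
    unfolding gradK_def by (simp add: algebra_simps)
  then have "norm (u - v) \<le> p * norm (z1 - z2) / (p - L)"
    using p_gt L_pos xmin_in_X p_minus_L_pos gradK_strongly_monotone
      xmin_variational_inequality[OF xmin_in_X]
    by (intro norm_diff_le_of_variational_inequalities[where a = "gradK y z1 u" and b = "gradK y z2 v" and b' = "gradK y z2 u"])
      (auto simp: u_def v_def)
  then show ?thesis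
    unfolding u_def v_def by simp
qed

section \<open>One iteration\<close>

lemma primal_descent:
  fixes x z :: 'a and y :: 'b and c :: real
  assumes "x \<in> X" "c > 0"
  defines "x' \<equiv> closest_point X (x - c *\<^sub>R gradK y z x)"
  shows "(1 / c - (p + L) / 2) * (norm (x - x'))\<^sup>2 \<le> K x z y - K x' z y"
proof -
  have "(norm (x - x'))\<^sup>2 \<le> c * (gradK y z x \<bullet> (x - x'))"
    using closest_point_step_progress[OF X(3,2) assms(1), of "- c *\<^sub>R gradK y z x"]
    unfolding x'_def by (simp add: inner_diff_right right_diff_distrib)
  moreover have "K x' z y \<le> K x z y - gradK y z x \<bullet> (x - x') + (p + L) / 2 * (norm (x - x'))\<^sup>2"
    using K_upper_bound[of x' z y x] by (simp add: inner_diff_right norm_minus_commute)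
  moreover have "(norm (x - x'))\<^sup>2 / c \<le> gradK y z x \<bullet> (x - x')"
    using calculation(1) \<open>c > 0\<close> by (simp add: pos_divide_le_eq mult.commute)
  ultimately have "(norm (x - x'))\<^sup>2 / c - (p + L) / 2 * (norm (x - x'))\<^sup>2 \<le> K x z y - K x' z y"
    by linarith
  then show ?thesis
    by (simp add: left_diff_distrib)
qed

lemma projected_gradient_error_bound:
  fixes x z :: 'a and y :: 'b and c :: real
  assumes "c > 0"
  defines "x' \<equiv> closest_point X (x - c *\<^sub>R gradK y z x)"
  shows "norm (x' - xmin f p X y z) \<le> (p + L + 1 / c) / (p - L) * norm (x - x')"
proof -
  define v where "v = xmin f p X y z"
  \<comment> \<open>\<open>x'\<close> satisfies the optimality condition of \<open>v\<close> for the gradient perturbed by \<open>(x' - x) / c\<close>.\<close>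
  define a where "a = gradK y z x + (1 / c) *\<^sub>R (x' - x)"
  have "(x - c *\<^sub>R gradK y z x - x') \<bullet> (v - x') \<le> 0"
    unfolding x'_def v_def by (rule closest_point_dot[OF X(3,2) xmin_in_X])
  moreover have "x - c *\<^sub>R gradK y z x - x' = - c *\<^sub>R a"
    unfolding a_def using \<open>c > 0\<close> by (simp add: algebra_simps)
  ultimately have "a \<bullet> (v - x') \<ge> 0"
    using \<open>c > 0\<close> by (simp add: zero_le_mult_iff)
  moreover have "x' \<in> X"
    unfolding x'_def by (rule closest_point_in_set[OF X(2,1)])
  moreover have "norm (gradK y z x' - a) \<le> (p + L) * norm (x - x') + norm (x - x') / c"
  proof -
    have "norm (gradK y z x' - a) \<le> norm (gradK y z x' - gradK y z x) + norm ((1 / c) *\<^sub>R (x' - x))"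
      unfolding a_def by (metis diff_diff_eq norm_triangle_ineq4)
    then show ?thesis
      using gradK_lipschitz[of y z x' x] \<open>c > 0\<close> by (simp add: norm_minus_commute)
  qed
  ultimately have "norm (x' - v) \<le> ((p + L) * norm (x - x') + norm (x - x') / c) / (p - L)"
    using xmin_variational_inequality gradK_strongly_monotone p_minus_L_pos
    by (intro norm_diff_le_of_variational_inequalities[where b = "gradK y z v"]) (auto simp: v_def)
  then show ?thesis
    unfolding v_def using \<open>c > 0\<close> by (simp add: field_simps)
qed

lemma dual_ascent:
  fixes x' z :: 'a and y :: 'b and \<alpha> \<epsilon> :: real
  assumes "y \<in> Y" "\<alpha> > 0" and err: "norm (x' - xmin f p X y z) \<le> \<epsilon>"
  defines "y' \<equiv> closest_point Y (y + \<alpha> *\<^sub>R gy x' y)"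
  shows "(norm (y - y'))\<^sup>2 / \<alpha> - 2 * L * (L / (p - L) * norm (y - y') + \<epsilon> + norm (y - y')) * norm (y - y')
    \<le> (K x' z y - K x' z y') + 2 * (dfun f p X y' z - dfun f p X y z)"
proof -
  define u where "u = xmin f p X y' z"
  define b where "b = norm (y - y')"
  define M where "M = L * (L / (p - L) * b + \<epsilon> + b) * b"
  define slope_x' where "slope_x' = gy x' y \<bullet> (y' - y)"
  define slope_u where "slope_u = gy u y' \<bullet> (y' - y)"
  have ascent: "b\<^sup>2 / \<alpha> \<le> slope_x'"
    using closest_point_step_progress[OF Y(3) closed_Y \<open>y \<in> Y\<close>, of "\<alpha> *\<^sub>R gy x' y"] \<open>\<alpha> > 0\<close>
    unfolding b_def y'_def slope_x'_def by (simp add: field_simps)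
  have concavity: "- slope_x' \<le> K x' z y - K x' z y'"
    using f_le_tangent_y[of x' y' y] unfolding Kfun_def slope_x'_def by simp
  have dfun_increase: "slope_u \<le> dfun f p X y' z - dfun f p X y z"
    using dfun_eq[of y' z] dfun_le[where w = u and y = y and z = z] xmin_in_X f_le_tangent_y[of u y y']
    unfolding u_def slope_u_def Kfun_def by (simp add: inner_diff_right)
  have "norm (u - x') \<le> L / (p - L) * b + \<epsilon>"
    using norm_triangle_ineq[of "u - xmin f p X y z" "xmin f p X y z - x'"]
      xmin_lipschitz_y[of y' z y] err
    unfolding u_def b_def by (simp add: norm_minus_commute)
  then have "L * norm (u - x') \<le> L * (L / (p - L) * b + \<epsilon>)"
    using L_pos by (intro mult_left_mono) auto
  then have "norm (gy u y' - gy x' y) \<le> L * (L / (p - L) * b + \<epsilon> + b)"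
    using gy_lipschitz[of u y' x' y] unfolding b_def by (simp add: norm_minus_commute distrib_left)
  then have "norm (gy x' y - gy u y') * b \<le> M"
    unfolding M_def b_def by (simp add: norm_minus_commute mult_right_mono)
  moreover have "slope_x' - slope_u \<le> norm (gy x' y - gy u y') * b"
    using norm_cauchy_schwarz[of "gy x' y - gy u y'" "y' - y"]
    unfolding slope_x'_def slope_u_def b_def by (simp add: inner_diff_left norm_minus_commute)
  ultimately have "b\<^sup>2 / \<alpha> - 2 * M \<le> (K x' z y - K x' z y') + 2 * (dfun f p X y' z - dfun f p X y z)"
    using ascent concavity dfun_increase by argo
  then show ?thesis
    unfolding M_def b_def by (simp add: mult.assoc)
qed

lemma K_proximal_step:
  fixes x z :: 'a and \<beta> :: real
  assumes "\<beta> \<noteq> 0"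
  defines "z' \<equiv> z + \<beta> *\<^sub>R (x - z)"
  shows "K x z y - K x z' y = p / 2 * (2 / \<beta> - 1) * (norm (z - z'))\<^sup>2"
proof -
  have "x - z' = (1 - \<beta>) *\<^sub>R (x - z)" "z - z' = (- \<beta>) *\<^sub>R (x - z)"
    unfolding z'_def by (simp_all add: algebra_simps)
  then have nx: "(norm (x - z'))\<^sup>2 = (1 - \<beta>)\<^sup>2 * (norm (x - z))\<^sup>2"
    and nz: "(norm (z - z'))\<^sup>2 = \<beta>\<^sup>2 * (norm (x - z))\<^sup>2"
    by (simp_all add: power_mult_distrib)
  have "K x z y - K x z' y = p / 2 * ((norm (x - z))\<^sup>2 - (norm (x - z'))\<^sup>2)"
    unfolding Kfun_def by (simp add: algebra_simps)
  also have "\<dots> = p / 2 * (2 * \<beta> - \<beta>\<^sup>2) * (norm (x - z))\<^sup>2"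
    unfolding nx by (simp add: power2_eq_square algebra_simps)
  also have "\<dots> = p / 2 * (2 / \<beta> - 1) * (norm (z - z'))\<^sup>2"
    unfolding nz using \<open>\<beta> \<noteq> 0\<close> by (simp add: power2_eq_square field_simps)
  finally show ?thesis .
qed

lemma dfun_Pfun_change_lower_bound:
  "- (2 * p * norm (z - z') * (p / (p - L) * norm (z - z') + L / (p - L) * norm (y' - y'')
        + norm (xstar f p X Y z - xmin f p X y'' z)))
    \<le> 2 * (dfun f p X y' z' - dfun f p X y' z) + 2 * (Pfun f p X Y z - Pfun f p X Y z')"
proof -
  define w where "w = xmin f p X y' z'"
  define xs where "xs = xstar f p X Y z"
  define s where "s = norm (z - z')"
  define \<rho> where "\<rho> = p / (p - L) * s + L / (p - L) * norm (y' - y'') + norm (xs - xmin f p X y'' z)"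
  define cross where "cross = (xs - w) \<bullet> (z - z')"
  have "p / 2 * ((norm (w - z'))\<^sup>2 - (norm (w - z))\<^sup>2) \<le> dfun f p X y' z' - dfun f p X y' z"
    using dfun_eq[of y' z'] dfun_le[where w = w and y = y' and z = z] xmin_in_X
    unfolding w_def Kfun_def by (simp add: algebra_simps)
  moreover have "p / 2 * ((norm (xs - z))\<^sup>2 - (norm (xs - z'))\<^sup>2) \<le> Pfun f p X Y z - Pfun f p X Y z'"
    using Pfun_eq[of z] Pfun_le[where w = xs and z = z'] xstar_in_X Kmax_shift[of z' xs z]
    unfolding xs_def by (simp add: algebra_simps)
  moreover have "p / 2 * ((norm (w - z'))\<^sup>2 - (norm (w - z))\<^sup>2)
      + p / 2 * ((norm (xs - z))\<^sup>2 - (norm (xs - z'))\<^sup>2) = - (p * cross)"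
    unfolding cross_def
    by (simp add: power2_norm_eq_inner inner_diff_left inner_diff_right inner_commute algebra_simps)
  moreover have "p * cross \<le> p * (\<rho> * s)"
  proof -
    have "norm (w - xs) \<le> norm (w - xmin f p X y' z) + norm (xmin f p X y' z - xmin f p X y'' z)
        + norm (xmin f p X y'' z - xs)"
      using norm_triangle_ineq[of "w - xmin f p X y' z" "xmin f p X y' z - xmin f p X y'' z"]
        norm_triangle_ineq[of "w - xmin f p X y'' z" "xmin f p X y'' z - xs"] by simp
    then have "norm (w - xs) \<le> \<rho>"
      using xmin_lipschitz_z[of y' z' z] xmin_lipschitz_y[of y' z y'']
      unfolding \<rho>_def w_def s_def by (simp add: norm_minus_commute)
    then have "cross \<le> \<rho> * s"
      using norm_cauchy_schwarz[of "xs - w" "z - z'"] mult_right_mono[of "norm (xs - w)" \<rho> s]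
      unfolding cross_def s_def by (simp add: norm_minus_commute)
    then show ?thesis
      using p_gt L_pos by (intro mult_left_mono) auto
  qed
  ultimately have "- (2 * (p * (\<rho> * s)))
      \<le> 2 * (dfun f p X y' z' - dfun f p X y' z) + 2 * (Pfun f p X Y z - Pfun f p X Y z')"
    by argo
  then show ?thesis
    unfolding \<rho>_def s_def xs_def by (simp add: mult_ac)
qed

lemma dual_step_gap:
  assumes "\<alpha> \<ge> 0"
  shows "norm (closest_point Y (y + \<alpha> *\<^sub>R gy x y) - closest_point Y (y + \<alpha> *\<^sub>R gy x' y))
    \<le> \<alpha> * L * norm (x - x')"
proof -
  have "norm (closest_point Y (y + \<alpha> *\<^sub>R gy x y) - closest_point Y (y + \<alpha> *\<^sub>R gy x' y))
      \<le> \<alpha> * norm (gy x y - gy x' y)"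
    using closest_point_lipschitz[OF Y(3) closed_Y Y(1), of "y + \<alpha> *\<^sub>R gy x y" "y + \<alpha> *\<^sub>R gy x' y"] assms
    by (simp add: dist_norm scaleR_diff_right[symmetric])
  also have "\<dots> \<le> \<alpha> * L * norm (x - x')"
    using mult_left_mono[OF gy_lipschitz[of x y x' y] assms] by (simp add: mult.assoc)
  finally show ?thesis .
qed

lemma phifun_diff_split:
  "phifun f p X Y x y z - phifun f p X Y x' y' z'
    = (K x z y - K x' z y) + ((K x' z y - K x' z y') + 2 * (dfun f p X y' z - dfun f p X y z))
      + (K x' z y' - K x' z' y')
      + (2 * (dfun f p X y' z' - dfun f p X y' z) + 2 * (Pfun f p X Y z - Pfun f p X Y z'))"
  unfolding phifun_def by (simp add: algebra_simps)

lemma phifun_step_decrease: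
  fixes x z :: 'a and y :: 'b and c \<alpha> \<beta> :: real
  assumes "x \<in> X" "y \<in> Y"
    and c: "c > 0" "c < 1 / (p + L)"
    and \<alpha>: "\<alpha> > 0" "\<alpha> < 1 / (11 * L)" "\<alpha> < c\<^sup>2 * (p - L)\<^sup>2 / (4 * L * (1 + c * (p - L))\<^sup>2)"
    and \<beta>: "\<beta> > 0" "\<beta> < 1 / 36"
    and x': "x' = closest_point X (x - c *\<^sub>R (gx x y + p *\<^sub>R (x - z)))"
    and y': "y' = closest_point Y (y + \<alpha> *\<^sub>R gy x' y)"
    and z': "z' = z + \<beta> *\<^sub>R (x' - z)"
    and y_plus: "y_plus = closest_point Y (y + \<alpha> *\<^sub>R gy (xmin f p X y z) y)"
  shows "1 / (8 * c) * (norm (x - x'))\<^sup>2 + 1 / (8 * \<alpha>) * (norm (y - y_plus))\<^sup>2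
      + p / (8 * \<beta>) * (norm (z - z'))\<^sup>2 - 24 * p * \<beta> * (norm (xstar f p X Y z - xmin f p X y_plus z))\<^sup>2
    \<le> phifun f p X Y x y z - phifun f p X Y x' y' z'"
proof -
  define \<kappa> where "\<kappa> = (p + L + 1 / c) / (p - L)"
  define a where "a = norm (x - x')"
  define b where "b = norm (y - y')"
  define r where "r = norm (y' - y_plus)"
  define s where "s = norm (z - z')"
  define e where "e = norm (xstar f p X Y z - xmin f p X y_plus z)"
  have x'_grad: "x' = closest_point X (x - c *\<^sub>R gradK y z x)"
    unfolding x' gradK_def ..
  have err: "norm (x' - xmin f p X y z) \<le> \<kappa> * a"
    unfolding x'_grad a_def \<kappa>_def by (rule projected_gradient_error_bound[OF c(1)])
  have primal: "(1 / c - (p + L) / 2) * a\<^sup>2 \<le> K x z y - K x' z y"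
    unfolding x'_grad a_def by (rule primal_descent[OF \<open>x \<in> X\<close> c(1)])
  have dual: "b\<^sup>2 / \<alpha> - 2 * L * (L / (p - L) * b + \<kappa> * a + b) * b
      \<le> (K x' z y - K x' z y') + 2 * (dfun f p X y' z - dfun f p X y z)"
    unfolding b_def y' by (rule dual_ascent[OF \<open>y \<in> Y\<close> \<alpha>(1) err])
  have proximal: "K x' z y' - K x' z' y' = p / 2 * (2 / \<beta> - 1) * s\<^sup>2"
    unfolding s_def z' using \<beta>(1) by (intro K_proximal_step) simp
  have dfun_Pfun: "- (2 * p * s * (p / (p - L) * s + L / (p - L) * r + e))
      \<le> 2 * (dfun f p X y' z' - dfun f p X y' z) + 2 * (Pfun f p X Y z - Pfun f p X Y z')"
    unfolding s_def r_def e_def by (rule dfun_Pfun_change_lower_bound)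
  have "r \<le> \<alpha> * L * norm (x' - xmin f p X y z)"
    unfolding r_def y' y_plus using \<alpha>(1) by (intro dual_step_gap) simp
  also have "\<dots> \<le> \<alpha> * L * (\<kappa> * a)"
    using err \<alpha>(1) L_pos by (intro mult_left_mono) auto
  finally have r_bound: "r \<le> \<alpha> * L * \<kappa> * a"
    by (simp add: mult.assoc)
  have "(norm (y - y_plus))\<^sup>2 \<le> (b + r)\<^sup>2"
    using norm_triangle_ineq[of "y - y'" "y' - y_plus"] unfolding b_def r_def
    by (intro power_mono) auto
  then have primal_dual: "1 / (8 * c) * a\<^sup>2 + 1 / (8 * \<alpha>) * (norm (y - y_plus))\<^sup>2
      \<le> (1 / c - (p + L) / 2) * a\<^sup>2 + b\<^sup>2 / \<alpha>
         - 2 * L * (L / (p - L) * b + \<kappa> * a + b) * b - p * (L / (p - L))\<^sup>2 * r\<^sup>2"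
    using r_bound unfolding \<kappa>_def r_def
    by (intro primal_dual_terms_bound[OF L_pos p_gt c \<alpha>]) auto
  have proximal_terms: "p / (8 * \<beta>) * s\<^sup>2 - 24 * p * \<beta> * e\<^sup>2 - p * (L / (p - L))\<^sup>2 * r\<^sup>2
      \<le> p / 2 * (2 / \<beta> - 1) * s\<^sup>2 - 2 * p * s * (p / (p - L) * s + L / (p - L) * r + e)"
    using p_gt L_pos p_minus_L_pos \<beta> by (intro proximal_terms_bound) (auto simp: field_simps)
  show ?thesis
    using phifun_diff_split[of x y z x' y' z'] primal dual proximal dfun_Pfun primal_dual proximal_terms
    unfolding a_def s_def e_def by argo
qed

end

theorem proposition2:
  fixes f :: "'a::euclidean_space \<Rightarrow> 'b::euclidean_space \<Rightarrow> real"
    and gx :: "'a \<Rightarrow> 'b \<Rightarrow> 'a" and gy :: "'a \<Rightarrow> 'b \<Rightarrow> 'b"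
    and X :: "'a set" and Y :: "'b set"
    and L p c \<alpha> \<beta> :: real
    and xs :: "nat \<Rightarrow> 'a" and ys :: "nat \<Rightarrow> 'b" and zs :: "nat \<Rightarrow> 'a"
  assumes X: "X \<noteq> {}" "closed X" "convex X"
    and Y: "Y \<noteq> {}" "compact Y" "convex Y"
    and deriv: "\<And>x y. (case_prod f has_derivative (\<lambda>(h, k). gx x y \<bullet> h + gy x y \<bullet> k)) (at (x, y))"
    and concave: "\<And>x. concave_on UNIV (f x)"
    and Lpos: "L > 0"
    and Lip_x: "\<And>x y x' y'. norm (gx x y - gx x' y') \<le> L * norm ((x, y) - (x', y'))"
    and Lip_y: "\<And>x y x' y'. norm (gy x y - gy x' y') \<le> L * norm ((x, y) - (x', y'))"
    and psi_bdd: "\<exists>B. \<forall>x. B \<le> (SUP y\<in>Y. f x y)"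
    and p: "p > 3 * L"
    and c: "c > 0" "c < 1 / (p + L)"
    and \<alpha>: "\<alpha> > 0" "\<alpha> < 1 / (11 * L)"
          "\<alpha> < c\<^sup>2 * (p - L)\<^sup>2 / (4 * L * (1 + c * (p - L))\<^sup>2)"
    and \<beta>: "\<beta> > 0" "\<beta> < 1 / 36" "\<beta> < (p - L)\<^sup>2 / (384 * \<alpha> * p * (p + L)\<^sup>2)"
    and init: "xs 0 \<in> X" "ys 0 \<in> Y"
    and x_step: "\<And>t. xs (Suc t) = closest_point X (xs t - c *\<^sub>R (gx (xs t) (ys t) + p *\<^sub>R (xs t - zs t)))"
    and y_step: "\<And>t. ys (Suc t) = closest_point Y (ys t + \<alpha> *\<^sub>R gy (xs (Suc t)) (ys t))"
    and z_step: "\<And>t. zs (Suc t) = zs t + \<beta> *\<^sub>R (xs (Suc t) - zs t)"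
  shows "\<forall>t. let
      yplus = closest_point Y (ys t + \<alpha> *\<^sub>R gy (xmin f p X (ys t) (zs t)) (ys t))
    in phifun f p X Y (xs t) (ys t) (zs t) - phifun f p X Y (xs (Suc t)) (ys (Suc t)) (zs (Suc t))
       \<ge> 1 / (8 * c) * (norm (xs t - xs (Suc t)))\<^sup>2
         + 1 / (8 * \<alpha>) * (norm (ys t - yplus))\<^sup>2
         + p / (8 * \<beta>) * (norm (zs t - zs (Suc t)))\<^sup>2
         - 24 * p * \<beta> * (norm (xstar f p X Y (zs t) - xmin f p X yplus (zs t)))\<^sup>2"
proof -
  interpret smoothed_gda f gx gy X Y L p
    using X Y deriv concave Lpos Lip_x Lip_y p by unfold_locales
  \<comment> \<open>The lower bound on psi and the last bound on beta are only needed for the convergence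
    analysis that builds on this estimate, not for the one-step estimate itself.\<close>
  have feasible: "xs t \<in> X \<and> ys t \<in> Y" for t
  proof (induction t)
    case 0
    then show ?case
      using init by simp
  next
    case (Suc t)
    then show ?case
      unfolding x_step y_step by (simp add: closest_point_in_set X(1,2) closed_Y Y(1))
  qed
  show ?thesis
    unfolding Let_def
    using phifun_step_decrease[OF conjunct1[OF feasible] conjunct2[OF feasible] c \<alpha> \<beta>(1,2)
        x_step y_step z_step refl]
    by blast
qed

end
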